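(* Let $Y=y[0,\dots,A-1]$ and $Z=z[0,\dots,B-1]$ ($A,B\ge1$) be finite sequences with values in a totally ordered set, each regarded on a linear domain, and let $X=x[0,\dots,A+B-1]$ be the sequence obtained by gluing $Y$ and $Z$, i.e. $x[i]=y[i]$ for $i<A$ and $x[A+j]=z[j]$, with $A-1$ and $A$ made adjacent. Consider the boundary extrema at the glue point: the flat of $Y$ containing $y[A-1]$ and the flat of $Z$ containing $z[0]$. If both are local minima (respectively both are local maxima), then the number of local minima (respectively local maxima) of $X$ equals the number of local minima (respectively local maxima) of $Y$ plus that of $Z$, minus one.
   Context: For a sequence on a linear domain (index $i$ adjacent to $i+1$), a flat is a maximal run of consecutive indices with equal value $l$; its outer neighbours are the (at most two) indices adjacent to the run but not in it. A flat is a local minimum if all its existing outer neighbours have value $>l$, and a local maximum if all its existing outer neighbours have value $<l$. Flats at the ends of the domain (boundary extrema) are classified by their single outer neighbour, and a flat with no outer neighbour (a constant sequence) is counted both as a local minimum and a local maximum. The number of local minima (maxima) is the number of flats that are local minima (maxima). *)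

theory Defs
  imports Main
begin

text \<open>Sequences on a linear domain are lists; index i is adjacent to i+1.
A flat is a maximal run of consecutive indices i..j (i \<le> j) with equal value.\<close>

definition is_flat :: "'a list \<Rightarrow> nat \<Rightarrow> nat \<Rightarrow> bool" where
  "is_flat xs i j \<longleftrightarrow> i \<le> j \<and> j < length xs
     \<and> (\<forall>k. i \<le> k \<and> k \<le> j \<longrightarrow> xs ! k = xs ! i)
     \<and> (i = 0 \<or> xs ! (i - 1) \<noteq> xs ! i)
     \<and> (j + 1 = length xs \<or> xs ! (j + 1) \<noteq> xs ! i)"

text \<open>A flat is a local minimum if all its existing outer neighbours have larger value
(a flat without outer neighbours is vacuously both a minimum and a maximum).\<close>

definition flat_is_min :: "'a::linorder list \<Rightarrow> nat \<Rightarrow> nat \<Rightarrow> bool" where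
  "flat_is_min xs i j \<longleftrightarrow> is_flat xs i j
     \<and> (i = 0 \<or> xs ! (i - 1) > xs ! i)
     \<and> (j + 1 = length xs \<or> xs ! (j + 1) > xs ! i)"

definition flat_is_max :: "'a::linorder list \<Rightarrow> nat \<Rightarrow> nat \<Rightarrow> bool" where
  "flat_is_max xs i j \<longleftrightarrow> is_flat xs i j
     \<and> (i = 0 \<or> xs ! (i - 1) < xs ! i)
     \<and> (j + 1 = length xs \<or> xs ! (j + 1) < xs ! i)"

definition num_minima :: "'a::linorder list \<Rightarrow> nat" where
  "num_minima xs = card {(i, j). flat_is_min xs i j}"

definition num_maxima :: "'a::linorder list \<Rightarrow> nat" where
  "num_maxima xs = card {(i, j). flat_is_max xs i j}"

end

theory Submission
  imports Defs
begin

(* Flats partition the indices, and gluing changes neither the flats of Y that end before its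
   last index nor those of Z that start after its first index, nor whether they are extrema.  If y[A-1] = z[0], the two boundary flats merge
   into a single flat whose outer neighbours are theirs, hence again an extremum.  Otherwise they
   remain separate flats of X, now neighbouring each other, and by trichotomy exactly one of them
   is still an extremum.  Either way two extrema are replaced by one.  Minima and maxima are
   handled at once by letting an asymmetric total relation r decide when an outer neighbour is
   on the correct side of a flat. *)

definition extremal_flat :: "('a \<Rightarrow> 'a \<Rightarrow> bool) \<Rightarrow> 'a list \<Rightarrow> nat \<Rightarrow> nat \<Rightarrow> bool" where
  "extremal_flat r xs i j \<longleftrightarrow> is_flat xs i j
     \<and> (i = 0 \<or> r (xs ! (i - 1)) (xs ! i))
     \<and> (j + 1 = length xs \<or> r (xs ! (j + 1)) (xs ! i))"

lemma flat_is_min_eq_extremal_flat: "flat_is_min xs i j \<longleftrightarrow> extremal_flat (>) xs i j"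
  unfolding flat_is_min_def extremal_flat_def ..

lemma flat_is_max_eq_extremal_flat: "flat_is_max xs i j \<longleftrightarrow> extremal_flat (<) xs i j"
  unfolding flat_is_max_def extremal_flat_def ..

lemma is_flatI:
  assumes "i \<le> j" "j < length xs" "\<And>k. i \<le> k \<Longrightarrow> k \<le> j \<Longrightarrow> xs ! k = xs ! i"
    "0 < i \<Longrightarrow> xs ! (i - 1) \<noteq> xs ! i" "j + 1 < length xs \<Longrightarrow> xs ! (j + 1) \<noteq> xs ! i"
  shows "is_flat xs i j"
  using assms unfolding is_flat_def by (metis Suc_eq_plus1 Suc_lessI gr0I)

lemma is_flatD:
  assumes "is_flat xs i j"
  shows "i \<le> j" "j < length xs" "\<And>k. i \<le> k \<Longrightarrow> k \<le> j \<Longrightarrow> xs ! k = xs ! i"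
    "0 < i \<Longrightarrow> xs ! (i - 1) \<noteq> xs ! i" "j + 1 < length xs \<Longrightarrow> xs ! (j + 1) \<noteq> xs ! i"
  using assms unfolding is_flat_def by (blast, blast, blast, metis less_irrefl, metis less_irrefl)

lemma is_flat_overlap_le:
  assumes ij: "is_flat xs i j" and ij': "is_flat xs i' j'" and overlap: "i' \<le> j"
  shows "i' \<le> i \<and> j' \<le> j"
proof (intro conjI; rule ccontr)
  assume "\<not> i' \<le> i"
  then have "xs ! (i' - 1) = xs ! i" "xs ! i' = xs ! i"
    using is_flatD(3)[OF ij, of "i' - 1"] is_flatD(3)[OF ij, of i'] overlap by simp_all
  then show False using is_flatD(4)[OF ij'] \<open>\<not> i' \<le> i\<close> by simp
next
  assume "\<not> j' \<le> j"
  then have "xs ! (j + 1) = xs ! i'" "xs ! j = xs ! i'"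
    using is_flatD(3)[OF ij', of "j + 1"] is_flatD(3)[OF ij', of j] overlap by simp_all
  moreover have "xs ! j = xs ! i" using is_flatD(1)[OF ij] by (rule is_flatD(3)[OF ij]) simp
  moreover have "j + 1 < length xs" using is_flatD(2)[OF ij'] \<open>\<not> j' \<le> j\<close> by simp
  ultimately show False using is_flatD(5)[OF ij] by metis
qed

lemma is_flat_overlap_eq:
  assumes "is_flat xs i j" "is_flat xs i' j'" "i' \<le> j" "i \<le> j'"
  shows "i = i' \<and> j = j'"
  using is_flat_overlap_le[OF assms(1,2,3)] is_flat_overlap_le[OF assms(2,1,4)] by simp

lemma is_flat_take:
  assumes "j + 1 < n"
  shows "is_flat (take n xs) i j \<longleftrightarrow> is_flat xs i j"
proof (cases "i \<le> j")
  case True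
  have "take n xs ! k = xs ! k" if "k \<le> j + 1" for k using that assms by simp
  moreover have "j < length (take n xs) \<longleftrightarrow> j < length xs"
    "j + 1 = length (take n xs) \<longleftrightarrow> j + 1 = length xs" using assms by auto
  ultimately show ?thesis using True unfolding is_flat_def by simp
qed (simp add: is_flat_def)

lemma all_nat_shift_iff:
  "(\<forall>k. i \<le> k \<and> k \<le> j \<longrightarrow> P (s + k)) \<longleftrightarrow> (\<forall>k. s + i \<le> k \<and> k \<le> s + j \<longrightarrow> P (k::nat))"
proof (intro iffI allI impI)
  fix k assume all: "\<forall>k. i \<le> k \<and> k \<le> j \<longrightarrow> P (s + k)" and k: "s + i \<le> k \<and> k \<le> s + j"
  then have "i \<le> k - s \<and> k - s \<le> j" by linarith
  with all have "P (s + (k - s))" by blast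
  with k show "P k" by simp
qed simp

lemma is_flat_drop:
  assumes "0 < i" "s \<le> length xs"
  shows "is_flat (drop s xs) i j \<longleftrightarrow> is_flat xs (s + i) (s + j)"
proof -
  have "drop s xs ! k = xs ! (s + k)" for k using assms(2) by simp
  moreover have "s + i - 1 = s + (i - 1)" using assms(1) by simp
  moreover have "j < length xs - s \<longleftrightarrow> s + j < length xs"
    "j + 1 = length xs - s \<longleftrightarrow> s + j + 1 = length xs"
    using assms(2) by linarith+
  ultimately show ?thesis
    using assms(1) unfolding is_flat_def all_nat_shift_iff[where P = "\<lambda>k. xs ! k = xs ! (s + i)", symmetric]
    by simp
qed

lemma extremal_flat_take:
  assumes "j + 1 < n"
  shows "extremal_flat r (take n xs) i j \<longleftrightarrow> extremal_flat r xs i j"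
proof (cases "i \<le> j")
  case True
  then have "take n xs ! (i - 1) = xs ! (i - 1)" "take n xs ! i = xs ! i"
    "take n xs ! (j + 1) = xs ! (j + 1)" using assms by simp_all
  moreover have "j + 1 = length (take n xs) \<longleftrightarrow> j + 1 = length xs" using assms by auto
  ultimately show ?thesis unfolding extremal_flat_def is_flat_take[OF assms] by simp
qed (simp add: extremal_flat_def is_flat_def)

lemma extremal_flat_drop:
  assumes "0 < i" "s \<le> length xs"
  shows "extremal_flat r (drop s xs) i j \<longleftrightarrow> extremal_flat r xs (s + i) (s + j)"
proof -
  have "drop s xs ! (i - 1) = xs ! (s + i - 1)" "drop s xs ! i = xs ! (s + i)"
    "drop s xs ! (j + 1) = xs ! (s + j + 1)" using assms by simp_all
  moreover have "j + 1 = length (drop s xs) \<longleftrightarrow> s + j + 1 = length xs" using assms(2) by auto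
  ultimately show ?thesis using assms(1) unfolding extremal_flat_def is_flat_drop[OF assms] by simp
qed

lemma finite_extremal_flats: "finite {(i, j). extremal_flat r xs i j}"
proof (rule finite_subset)
  show "{(i, j). extremal_flat r xs i j} \<subseteq> {..<length xs} \<times> {..<length xs}"
    unfolding extremal_flat_def using is_flatD(1,2) by fastforce
qed simp

lemma card_extremal_flats_last:
  assumes last: "extremal_flat r xs p (length xs - 1)"
  shows "card {(i, j). extremal_flat r xs i j}
    = Suc (card {(i, j). extremal_flat r xs i j \<and> j + 1 < length xs})"
proof -
  have flat: "is_flat xs p (length xs - 1)" using last unfolding extremal_flat_def by blast
  have "{(i, j). extremal_flat r xs i j}
      = insert (p, length xs - 1) {(i, j). extremal_flat r xs i j \<and> j + 1 < length xs}"
  proof (intro set_eqI iffI)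
    fix ij assume "ij \<in> {(i, j). extremal_flat r xs i j}"
    then obtain i j where ij: "ij = (i, j)" "is_flat xs i j" "extremal_flat r xs i j"
      unfolding extremal_flat_def by blast
    show "ij \<in> insert (p, length xs - 1) {(i, j). extremal_flat r xs i j \<and> j + 1 < length xs}"
    proof (cases "j + 1 < length xs")
      case False
      then have "j = length xs - 1" using is_flatD(2)[OF ij(2)] by simp
      then have "i = p" using is_flat_overlap_eq[OF ij(2) flat] is_flatD(1,2)[OF flat] is_flatD(1)[OF ij(2)]
        by simp
      with \<open>j = length xs - 1\<close> ij(1) show ?thesis by simp
    qed (use ij in simp)
  qed (use last in auto)
  moreover have "length xs - 1 + 1 = length xs" using is_flatD(2)[OF flat] by simp
  ultimately show ?thesis using finite_extremal_flats[of r xs] by simp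
qed

lemma card_extremal_flats_first:
  assumes first: "extremal_flat r xs 0 q"
  shows "card {(i, j). extremal_flat r xs i j} = Suc (card {(i, j). extremal_flat r xs i j \<and> 0 < i})"
proof -
  have flat: "is_flat xs 0 q" using first unfolding extremal_flat_def by blast
  have "{(i, j). extremal_flat r xs i j} = insert (0, q) {(i, j). extremal_flat r xs i j \<and> 0 < i}"
  proof (intro set_eqI iffI)
    fix ij assume "ij \<in> {(i, j). extremal_flat r xs i j}"
    then obtain i j where ij: "ij = (i, j)" "is_flat xs i j" "extremal_flat r xs i j"
      unfolding extremal_flat_def by blast
    show "ij \<in> insert (0, q) {(i, j). extremal_flat r xs i j \<and> 0 < i}"
    proof (cases "0 < i")
      case False
      then have "j = q" using is_flat_overlap_eq[OF ij(2) flat] is_flatD(1)[OF ij(2)] by simp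
      with False ij(1) show ?thesis by simp
    qed (use ij in simp)
  qed (use first in auto)
  then show ?thesis using finite_extremal_flats[of r xs] by simp
qed

lemma is_flat_append_merge:
  assumes ys: "is_flat ys p (length ys - 1)" and zs: "is_flat zs 0 q"
    and glue: "ys ! (length ys - 1) = zs ! 0"
  shows "is_flat (ys @ zs) p (length ys + q)"
proof -
  have p: "p \<le> length ys - 1" "length ys - 1 < length ys" "p - 1 < length ys"
    using is_flatD(1,2)[OF ys] by simp_all
  have yp: "ys ! p = zs ! 0" using is_flatD(3)[OF ys, of "length ys - 1"] p glue by simp
  show ?thesis
  proof (rule is_flatI)
    fix k assume k: "p \<le> k" "k \<le> length ys + q"
    show "(ys @ zs) ! k = (ys @ zs) ! p"
    proof (cases "k < length ys")
      case True
      then show ?thesis using is_flatD(3)[OF ys, of k] k p by (simp add: nth_append)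
    next
      case False
      then have "zs ! (k - length ys) = zs ! 0" using k by (intro is_flatD(3)[OF zs]) simp_all
      then show ?thesis using False p yp by (simp add: nth_append)
    qed
  next
    show "(ys @ zs) ! (length ys + q + 1) \<noteq> (ys @ zs) ! p"
      if "length ys + q + 1 < length (ys @ zs)"
      using that is_flatD(5)[OF zs] p yp by (simp add: nth_append)
  qed (use p is_flatD(2,4)[OF ys] is_flatD(2)[OF zs] in \<open>simp_all add: nth_append\<close>)
qed

lemma is_flat_append_last:
  assumes ys: "is_flat ys p (length ys - 1)" and "zs \<noteq> []"
    and glue: "ys ! (length ys - 1) \<noteq> zs ! 0"
  shows "is_flat (ys @ zs) p (length ys - 1)"
proof -
  have p: "p \<le> length ys - 1" "length ys - 1 < length ys" "p - 1 < length ys"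
    "length ys - 1 + 1 = length ys"
    using is_flatD(1,2)[OF ys] by simp_all
  have yp: "ys ! p = ys ! (length ys - 1)" using is_flatD(3)[OF ys, of "length ys - 1"] p by simp
  show ?thesis
  proof (rule is_flatI)
    fix k assume "p \<le> k" "k \<le> length ys - 1"
    then show "(ys @ zs) ! k = (ys @ zs) ! p" using is_flatD(3)[OF ys, of k] p by (simp add: nth_append)
  qed (use p yp glue is_flatD(4)[OF ys] \<open>zs \<noteq> []\<close> in \<open>simp_all add: nth_append\<close>)
qed

lemma is_flat_append_first:
  assumes zs: "is_flat zs 0 q" and "ys \<noteq> []"
    and glue: "ys ! (length ys - 1) \<noteq> zs ! 0"
  shows "is_flat (ys @ zs) (length ys) (length ys + q)"
proof (rule is_flatI)
  fix k assume "length ys \<le> k" "k \<le> length ys + q"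
  then show "(ys @ zs) ! k = (ys @ zs) ! length ys" using is_flatD(3)[OF zs, of "k - length ys"]
    by (simp add: nth_append)
qed (use glue is_flatD(2,5)[OF zs] \<open>ys \<noteq> []\<close> in \<open>simp_all add: nth_append\<close>)

lemma is_flat_append_at_glue:
  assumes ys: "is_flat ys p (length ys - 1)" and zs: "is_flat zs 0 q"
    and ij: "is_flat (ys @ zs) i j" and glue: "i \<le> length ys" "length ys \<le> j + 1"
  shows "if ys ! (length ys - 1) = zs ! 0 then (i, j) = (p, length ys + q)
         else (i, j) = (p, length ys - 1) \<or> (i, j) = (length ys, length ys + q)"
proof -
  have "ys \<noteq> []" "zs \<noteq> []" "p \<le> length ys - 1" using is_flatD(1,2)[OF ys] is_flatD(2)[OF zs] by auto
  show ?thesis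
  proof (cases "ys ! (length ys - 1) = zs ! 0")
    case True
    then show ?thesis
      using is_flat_overlap_eq[OF ij is_flat_append_merge[OF ys zs True]] glue \<open>p \<le> length ys - 1\<close>
      by simp
  next
    case False
    consider "i < length ys" | "i = length ys" using glue by linarith
    then show ?thesis
    proof cases
      case 1
      then have "(i, j) = (p, length ys - 1)"
        using is_flat_overlap_eq[OF ij is_flat_append_last[OF ys \<open>zs \<noteq> []\<close> False]] glue
          \<open>p \<le> length ys - 1\<close> by simp
      with False show ?thesis by simp
    next
      case 2
      then have "(i, j) = (length ys, length ys + q)"
        using is_flat_overlap_eq[OF ij is_flat_append_first[OF zs \<open>ys \<noteq> []\<close> False]] is_flatD(1)[OF ij]
        by simp
      with False show ?thesis by simp
    qed
  qed
qed

lemma extremal_flat_append_merge: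
  assumes ys: "extremal_flat r ys p (length ys - 1)" and zs: "extremal_flat r zs 0 q"
    and glue: "ys ! (length ys - 1) = zs ! 0"
  shows "extremal_flat r (ys @ zs) p (length ys + q)"
proof -
  have ys_flat: "is_flat ys p (length ys - 1)" and zs_flat: "is_flat zs 0 q"
    using ys zs unfolding extremal_flat_def by blast+
  have p: "p \<le> length ys - 1" "length ys - 1 < length ys" "p - 1 < length ys"
    using is_flatD(1,2)[OF ys_flat] by simp_all
  have "(ys @ zs) ! p = zs ! 0" using is_flatD(3)[OF ys_flat, of "length ys - 1"] p glue by (simp add: nth_append)
  then show ?thesis using is_flat_append_merge[OF ys_flat zs_flat glue] ys zs p
    unfolding extremal_flat_def by (simp add: nth_append)
qed

lemma extremal_flat_append_last_iff:
  assumes ys: "extremal_flat r ys p (length ys - 1)" and "zs \<noteq> []"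
    and glue: "ys ! (length ys - 1) \<noteq> zs ! 0"
  shows "extremal_flat r (ys @ zs) p (length ys - 1) \<longleftrightarrow> r (zs ! 0) (ys ! (length ys - 1))"
proof -
  have ys_flat: "is_flat ys p (length ys - 1)" using ys unfolding extremal_flat_def by blast
  have p: "p \<le> length ys - 1" "length ys - 1 < length ys" "p - 1 < length ys"
    "length ys - 1 + 1 = length ys"
    using is_flatD(1,2)[OF ys_flat] by simp_all
  have "(ys @ zs) ! p = ys ! (length ys - 1)" using is_flatD(3)[OF ys_flat, of "length ys - 1"] p
    by (simp add: nth_append)
  then show ?thesis using is_flat_append_last[OF ys_flat \<open>zs \<noteq> []\<close> glue] ys p \<open>zs \<noteq> []\<close>
    unfolding extremal_flat_def by (simp add: nth_append)
qed

lemma extremal_flat_append_first_iff: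
  assumes zs: "extremal_flat r zs 0 q" and "ys \<noteq> []"
    and glue: "ys ! (length ys - 1) \<noteq> zs ! 0"
  shows "extremal_flat r (ys @ zs) (length ys) (length ys + q) \<longleftrightarrow> r (ys ! (length ys - 1)) (zs ! 0)"
proof -
  have zs_flat: "is_flat zs 0 q" using zs unfolding extremal_flat_def by blast
  show ?thesis using is_flat_append_first[OF zs_flat \<open>ys \<noteq> []\<close> glue] zs \<open>ys \<noteq> []\<close>
    unfolding extremal_flat_def by (simp add: nth_append)
qed

lemma card_extremal_flats_at_glue:
  assumes asym: "asymp r" and total: "totalp r"
    and ys: "extremal_flat r ys p (length ys - 1)" and zs: "extremal_flat r zs 0 q"
  shows "card {(i, j). extremal_flat r (ys @ zs) i j \<and> i \<le> length ys \<and> length ys \<le> j + 1} = 1"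
proof -
  let ?A = "length ys" and ?a = "ys ! (length ys - 1)" and ?b = "zs ! 0"
  let ?G = "{(i, j). extremal_flat r (ys @ zs) i j \<and> i \<le> ?A \<and> ?A \<le> j + 1}"
  have ys_flat: "is_flat ys p (?A - 1)" and zs_flat: "is_flat zs 0 q"
    using ys zs unfolding extremal_flat_def by blast+
  have "p \<le> ?A - 1" "zs \<noteq> []" "ys \<noteq> []" using is_flatD(1,2)[OF ys_flat] is_flatD(2)[OF zs_flat] by auto
  have G_cases: "if ?a = ?b then ij = (p, ?A + q) else ij = (p, ?A - 1) \<or> ij = (?A, ?A + q)"
    if "ij \<in> ?G" for ij
  proof -
    obtain i j where "ij = (i, j)" "is_flat (ys @ zs) i j" "i \<le> ?A" "?A \<le> j + 1"
      using \<open>ij \<in> ?G\<close> unfolding extremal_flat_def by blast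
    then show ?thesis using is_flat_append_at_glue[OF ys_flat zs_flat] by presburger
  qed
  consider "?a = ?b" | "?a \<noteq> ?b" "r ?b ?a" "\<not> r ?a ?b" | "?a \<noteq> ?b" "r ?a ?b" "\<not> r ?b ?a"
    using asympD[OF asym] totalpD[OF total] by blast
  then have "?G = {(p, ?A + q)} \<or> ?G = {(p, ?A - 1)} \<or> ?G = {(?A, ?A + q)}"
  proof cases
    case 1
    then show ?thesis using G_cases extremal_flat_append_merge[OF ys zs 1] \<open>p \<le> ?A - 1\<close> by auto
  next
    case 2
    then show ?thesis using G_cases extremal_flat_append_last_iff[OF ys \<open>zs \<noteq> []\<close> 2(1)]
      extremal_flat_append_first_iff[OF zs \<open>ys \<noteq> []\<close> 2(1)] \<open>p \<le> ?A - 1\<close> by auto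
  next
    case 3
    then show ?thesis using G_cases extremal_flat_append_last_iff[OF ys \<open>zs \<noteq> []\<close> 3(1)]
      extremal_flat_append_first_iff[OF zs \<open>ys \<noteq> []\<close> 3(1)] \<open>p \<le> ?A - 1\<close> by auto
  qed
  then show ?thesis by auto
qed

lemma card_extremal_flats_append:
  assumes "asymp r" "totalp r"
    and ys: "extremal_flat r ys p (length ys - 1)" and zs: "extremal_flat r zs 0 q"
  shows "card {(i, j). extremal_flat r (ys @ zs) i j}
    = card {(i, j). extremal_flat r ys i j} + card {(i, j). extremal_flat r zs i j} - 1"
proof -
  let ?A = "length ys" and ?X = "ys @ zs"
  define L where "L = {(i, j). extremal_flat r ys i j \<and> j + 1 < ?A}"
  define R where "R = {(i, j). extremal_flat r zs i j \<and> 0 < i}"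
  define G where "G = {(i, j). extremal_flat r ?X i j \<and> i \<le> ?A \<and> ?A \<le> j + 1}"
  define shift where "shift = (\<lambda>(i, j). (?A + i, ?A + j))"
  have left: "extremal_flat r ?X i j \<longleftrightarrow> extremal_flat r ys i j" if "j + 1 < ?A" for i j
    using extremal_flat_take[OF that, of r ?X] by simp
  have right: "extremal_flat r ?X (?A + i) (?A + j) \<longleftrightarrow> extremal_flat r zs i j" if "0 < i" for i j
    using extremal_flat_drop[OF that, of ?A ?X r j] by simp
  have split: "{(i, j). extremal_flat r ?X i j} = L \<union> shift ` R \<union> G"
  proof (intro set_eqI iffI)
    fix ij assume "ij \<in> {(i, j). extremal_flat r ?X i j}"
    then obtain i j where ij: "ij = (i, j)" "extremal_flat r ?X i j" by blast
    consider "j + 1 < ?A" | "?A < i" | "i \<le> ?A" "?A \<le> j + 1" by linarith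
    then show "ij \<in> L \<union> shift ` R \<union> G"
    proof cases
      case 2
      moreover have "i \<le> j" using ij(2) is_flatD(1) unfolding extremal_flat_def by blast
      ultimately have "(i - ?A, j - ?A) \<in> R" "ij = shift (i - ?A, j - ?A)"
        using ij right[of "i - ?A" "j - ?A"] unfolding R_def shift_def by simp_all
      then show ?thesis by blast
    qed (use ij left in \<open>simp_all add: L_def G_def\<close>)
  qed (auto simp: L_def R_def G_def shift_def left right)
  have "L \<inter> shift ` R = {}" "(L \<union> shift ` R) \<inter> G = {}"
    by (auto simp: L_def R_def G_def shift_def)
  moreover have "finite L" "finite R" "finite G" "inj shift"
    using finite_extremal_flats unfolding L_def R_def G_def shift_def inj_def
    by (auto intro: rev_finite_subset)
  ultimately have "card {(i, j). extremal_flat r ?X i j} = card L + card R + card G"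
    unfolding split by (simp add: card_Un_disjoint card_image inj_on_subset)
  then show ?thesis
    using card_extremal_flats_at_glue[OF assms] card_extremal_flats_last[OF ys]
      card_extremal_flats_first[OF zs]
    unfolding L_def R_def G_def by simp
qed

theorem mainTheorem7:
  fixes ys zs :: "'a::linorder list"
  assumes "length ys \<ge> 1" and "length zs \<ge> 1"
  shows "((\<exists>i. flat_is_min ys i (length ys - 1)) \<and> (\<exists>j. flat_is_min zs 0 j)
           \<longrightarrow> num_minima (ys @ zs) = num_minima ys + num_minima zs - 1)
       \<and> ((\<exists>i. flat_is_max ys i (length ys - 1)) \<and> (\<exists>j. flat_is_max zs 0 j)
           \<longrightarrow> num_maxima (ys @ zs) = num_maxima ys + num_maxima zs - 1)"
proof (intro conjI impI)
  assume "(\<exists>i. flat_is_min ys i (length ys - 1)) \<and> (\<exists>j. flat_is_min zs 0 j)"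
  then obtain p q where "extremal_flat (>) ys p (length ys - 1)" "extremal_flat (>) zs 0 q"
    unfolding flat_is_min_eq_extremal_flat by blast
  then show "num_minima (ys @ zs) = num_minima ys + num_minima zs - 1"
    unfolding num_minima_def flat_is_min_eq_extremal_flat
    by (intro card_extremal_flats_append) simp_all
next
  assume "(\<exists>i. flat_is_max ys i (length ys - 1)) \<and> (\<exists>j. flat_is_max zs 0 j)"
  then obtain p q where "extremal_flat (<) ys p (length ys - 1)" "extremal_flat (<) zs 0 q"
    unfolding flat_is_max_eq_extremal_flat by blast
  then show "num_maxima (ys @ zs) = num_maxima ys + num_maxima zs - 1"
    unfolding num_maxima_def flat_is_max_eq_extremal_flat
    by (intro card_extremal_flats_append) simp_all
qed

end
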